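(* The matrix $$R_\Omega=\begin{pmatrix}q&0&0&0\\0&q&q-q^{-1}&0\\0&0&q^{-1}&0\\0&0&0&-q^{-1}\end{pmatrix}$$ is superizable with $p(1)=0$, $p(2)=1$, and the super FRT bialgebra $A(\underline R_\Omega)$ of $\underline R_\Omega^a{}_c{}^b{}_d=(-1)^{p(a)p(b)}(R_\Omega)^a{}_c{}^b{}_d$ is the super-bialgebra generated by $1$ and $\mathbf u=\begin{pmatrix}\alpha&\beta\\\gamma&\delta\end{pmatrix}$, $\alpha,\delta$ even and $\beta,\gamma$ odd, with relations $\beta\alpha=\alpha\beta$, $\gamma\alpha=q^2\alpha\gamma$, $\delta\beta=\beta\delta$, $\delta\gamma=q^{-2}\gamma\delta$, $\gamma\beta=-q^2\beta\gamma$, $\delta\alpha-\alpha\delta=(1-q^2)\beta\gamma$, $\beta^2=\gamma^2=0$, and matrix super-coproduct $\underline\Delta\mathbf u=\mathbf u\otimes\mathbf u$, $\underline\varepsilon(\mathbf u)=\mathrm{id}$. If $\alpha,\delta$ are made invertible, one obtains a super-quantum group $GL^\Omega_q(1|1)$ with antipode $\underline S(\mathbf u)=\begin{pmatrix}\alpha^{-1}+\alpha^{-1}\beta\delta^{-1}\gamma\alpha^{-1}&-\alpha^{-1}\beta\delta^{-1}\\-\delta^{-1}\gamma\alpha^{-1}&\delta^{-1}+\delta^{-1}\gamma\alpha^{-1}\beta\delta^{-1}\end{pmatrix}$, and the super-determinant $\underline{\det}(\mathbf u)=\alpha\delta^{-1}-\beta\delta^{-1}\gamma\delta^{-1}$ is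 a central, even, group-like element.
   Context: $4\times4$ matrices have entries $R^a{}_c{}^b{}_d$ with row index $(a,b)$, column $(c,d)$, ordered $11,12,21,22$; repeated indices summed. $R$ is superizable w.r.t. $p$ if $R^a{}_c{}^b{}_d=0$ whenever $p(a)+p(b)-p(c)-p(d)\not\equiv0\pmod2$. The super FRT bialgebra $A(\underline R)$ is generated by $1$ and $u^i{}_j$ of degree $p(i)+p(j)$ with relations $(-1)^{p(a)p(b)+p(c)p(e)}\underline R^a{}_f{}^b{}_e\,u^f{}_c\,u^e{}_d=(-1)^{p(c)p(d)+p(r)p(a)}u^b{}_r\,u^a{}_s\,\underline R^s{}_c{}^r{}_d$, super-coproduct $\underline\Delta u^i{}_j=\sum_ku^i{}_k\otimes u^k{}_j$ in the graded tensor product, counit $\delta^i_j$; here $u^1{}_1=\alpha$, $u^1{}_2=\beta$, $u^2{}_1=\gamma$, $u^2{}_2=\delta$. *)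

theory Defs
  imports Main
begin

definition pOm :: "nat \<Rightarrow> nat" where
  "pOm i = (if i = 2 then 1 else 0)"

text \<open>A 4x4 matrix is stored as R a c b d = entry in row (a,b), column (c,d).
  The matrix R_Omega:\<close>
definition ROm :: "'k::field \<Rightarrow> nat \<Rightarrow> nat \<Rightarrow> nat \<Rightarrow> nat \<Rightarrow> 'k" where
  "ROm q a c b d =
     (if (a,b,c,d) = (1,1,1,1) then q
      else if (a,b,c,d) = (1,2,1,2) then q
      else if (a,b,c,d) = (1,2,2,1) then q - inverse q
      else if (a,b,c,d) = (2,1,2,1) then inverse q
      else if (a,b,c,d) = (2,2,2,2) then - inverse q
      else 0)"

definition superizable :: "(nat \<Rightarrow> nat) \<Rightarrow> (nat \<Rightarrow> nat \<Rightarrow> nat \<Rightarrow> nat \<Rightarrow> 'k::ring_1) \<Rightarrow> bool" where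
  "superizable p R \<longleftrightarrow>
     (\<forall>a\<in>{1,2}. \<forall>b\<in>{1,2}. \<forall>c\<in>{1,2}. \<forall>d\<in>{1,2}.
        \<not> even (int (p a) + int (p b) - int (p c) - int (p d)) \<longrightarrow> R a c b d = 0)"

definition Rsup :: "(nat \<Rightarrow> nat) \<Rightarrow> (nat \<Rightarrow> nat \<Rightarrow> nat \<Rightarrow> nat \<Rightarrow> 'k::ring_1) \<Rightarrow> nat \<Rightarrow> nat \<Rightarrow> nat \<Rightarrow> nat \<Rightarrow> 'k" where
  "Rsup p R a c b d = (-1) ^ (p a * p b) * R a c b d"

text \<open>A k-algebra structure on the ring 'a, given by its structure map phi
  (a unital ring homomorphism from the field k into the centre of 'a).\<close>
definition k_alg :: "('k::field \<Rightarrow> 'a::ring_1) \<Rightarrow> bool" where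
  "k_alg \<phi> \<longleftrightarrow> \<phi> 1 = 1 \<and> (\<forall>x y. \<phi> (x + y) = \<phi> x + \<phi> y) \<and>
      (\<forall>x y. \<phi> (x * y) = \<phi> x * \<phi> y) \<and> (\<forall>x z. \<phi> x * z = z * \<phi> x)"

definition umat :: "'a \<Rightarrow> 'a \<Rightarrow> 'a \<Rightarrow> 'a \<Rightarrow> nat \<Rightarrow> nat \<Rightarrow> 'a" where
  "umat \<alpha> \<beta> \<gamma> \<delta> i j = (if i = 1 then (if j = 1 then \<alpha> else \<beta>) else (if j = 1 then \<gamma> else \<delta>))"

text \<open>The super FRT relations, for a product of generators given abstractly:
  prd f c e d stands for the product u^f_c u^e_d.\<close>
definition FRT_gen :: "('k::field \<Rightarrow> 'a::ring_1) \<Rightarrow> (nat \<Rightarrow> nat) \<Rightarrow> (nat \<Rightarrow> nat \<Rightarrow> nat \<Rightarrow> nat \<Rightarrow> 'k)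
     \<Rightarrow> (nat \<Rightarrow> nat \<Rightarrow> nat \<Rightarrow> nat \<Rightarrow> 'a) \<Rightarrow> bool" where
  "FRT_gen \<phi> p Rs prd \<longleftrightarrow>
     (\<forall>a\<in>{1,2}. \<forall>b\<in>{1,2}. \<forall>c\<in>{1,2}. \<forall>d\<in>{1,2}.
        (\<Sum>f\<in>{1,2}. \<Sum>e\<in>{1,2}. (-1) ^ (p a * p b + p c * p e) * \<phi> (Rs a f b e) * prd f c e d)
      = (\<Sum>r\<in>{1,2}. \<Sum>s\<in>{1,2}. (-1) ^ (p c * p d + p r * p a) * prd b r a s * \<phi> (Rs s c r d)))"

definition FRT :: "('k::field \<Rightarrow> 'a::ring_1) \<Rightarrow> (nat \<Rightarrow> nat) \<Rightarrow> (nat \<Rightarrow> nat \<Rightarrow> nat \<Rightarrow> nat \<Rightarrow> 'k)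
     \<Rightarrow> (nat \<Rightarrow> nat \<Rightarrow> 'a) \<Rightarrow> bool" where
  "FRT \<phi> p Rs u \<longleftrightarrow> FRT_gen \<phi> p Rs (\<lambda>f c e d. u f c * u e d)"

text \<open>The super FRT relations for u in the super-opposite algebra
  (product x *' y = (-1)^(|x||y|) y x, |u^i_j| = p i + p j); this is what it
  means that u is mapped by a super-anti-homomorphism.\<close>
definition FRT_sop :: "('k::field \<Rightarrow> 'a::ring_1) \<Rightarrow> (nat \<Rightarrow> nat) \<Rightarrow> (nat \<Rightarrow> nat \<Rightarrow> nat \<Rightarrow> nat \<Rightarrow> 'k)
     \<Rightarrow> (nat \<Rightarrow> nat \<Rightarrow> 'a) \<Rightarrow> bool" where
  "FRT_sop \<phi> p Rs u \<longleftrightarrow>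
     FRT_gen \<phi> p Rs (\<lambda>f c e d. (-1) ^ ((p f + p c) * (p e + p d)) * (u e d * u f c))"

definition omega_rels :: "('k::field \<Rightarrow> 'a::ring_1) \<Rightarrow> 'k \<Rightarrow> 'a \<Rightarrow> 'a \<Rightarrow> 'a \<Rightarrow> 'a \<Rightarrow> bool" where
  "omega_rels \<phi> q \<alpha> \<beta> \<gamma> \<delta> \<longleftrightarrow>
     \<beta> * \<alpha> = \<alpha> * \<beta> \<and>
     \<gamma> * \<alpha> = \<phi> (q ^ 2) * (\<alpha> * \<gamma>) \<and>
     \<delta> * \<beta> = \<beta> * \<delta> \<and>
     \<delta> * \<gamma> = \<phi> (inverse q ^ 2) * (\<gamma> * \<delta>) \<and>
     \<gamma> * \<beta> = - (\<phi> (q ^ 2) * (\<beta> * \<gamma>)) \<and>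
     \<delta> * \<alpha> - \<alpha> * \<delta> = \<phi> (1 - q ^ 2) * (\<beta> * \<gamma>) \<and>
     \<beta> * \<beta> = 0 \<and> \<gamma> * \<gamma> = 0"

text \<open>Graded commutation of two generator matrices (the two tensor factors of the
  graded tensor product A \<otimes> A): u^i_j v^k_l = (-1)^(|u^i_j||v^k_l|) v^k_l u^i_j.\<close>
definition supercomm :: "(nat \<Rightarrow> nat) \<Rightarrow> (nat \<Rightarrow> nat \<Rightarrow> 'a::ring_1) \<Rightarrow> (nat \<Rightarrow> nat \<Rightarrow> 'a) \<Rightarrow> bool" where
  "supercomm p u v \<longleftrightarrow>
     (\<forall>i\<in>{1,2}. \<forall>j\<in>{1,2}. \<forall>k\<in>{1,2}. \<forall>l\<in>{1,2}.
        u i j * v k l = (-1) ^ ((p i + p j) * (p k + p l)) * (v k l * u i j))"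

definition mmul :: "(nat \<Rightarrow> nat \<Rightarrow> 'a::ring_1) \<Rightarrow> (nat \<Rightarrow> nat \<Rightarrow> 'a) \<Rightarrow> nat \<Rightarrow> nat \<Rightarrow> 'a" where
  "mmul u v i j = (\<Sum>k\<in>{1,2}. u i k * v k j)"

definition is_id2 :: "(nat \<Rightarrow> nat \<Rightarrow> 'a::ring_1) \<Rightarrow> bool" where
  "is_id2 M \<longleftrightarrow> (\<forall>i\<in>{1,2}. \<forall>j\<in>{1,2}. M i j = (if i = j then 1 else 0))"

definition is_inv :: "'a::ring_1 \<Rightarrow> 'a \<Rightarrow> bool" where
  "is_inv x y \<longleftrightarrow> x * y = 1 \<and> y * x = 1"

text \<open>The antipode matrix, with ai = alpha^-1 and di = delta^-1.\<close>
definition Smat :: "'a::ring_1 \<Rightarrow> 'a \<Rightarrow> 'a \<Rightarrow> 'a \<Rightarrow> 'a \<Rightarrow> 'a \<Rightarrow> nat \<Rightarrow> nat \<Rightarrow> 'a" where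
  "Smat \<alpha> \<beta> \<gamma> \<delta> ai di =
     umat (ai + ai * \<beta> * di * \<gamma> * ai) (- (ai * \<beta> * di))
          (- (di * \<gamma> * ai)) (di + di * \<gamma> * ai * \<beta> * di)"

text \<open>Super-determinant, with di = delta^-1.\<close>
definition sdet :: "'a::ring_1 \<Rightarrow> 'a \<Rightarrow> 'a \<Rightarrow> 'a \<Rightarrow> 'a \<Rightarrow> 'a" where
  "sdet \<alpha> \<beta> \<gamma> \<delta> di = \<alpha> * di - \<beta> * di * \<gamma> * di"

end

theory Submission
  imports Defs
begin

text \<open>
  Written out component by component, the super FRT relations of R_Omega are sixteen linear
  relations, with central coefficients, among the quadratic monomials u^f_c u^e_d. When q + q\<inverse>
  is invertible they are equivalent to eight relations, which can be read as rewrite rules putting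
  every word in the generators into the order \<alpha> < \<beta> < \<gamma> < \<delta>. All the other claims (coproduct,
  antipode, super-determinant) are identities between such words. So they can be checked by
  rewriting to this normal form, once we know how \<alpha>\<inverse> and \<delta>\<inverse> commute past the generators and
  how two supercommuting copies of the generators commute past each other. For the antipode one
  also uses that the relations read in the super-opposite algebra are the same relations with q
  replaced by q\<inverse>.
\<close>

lemma k_alg_simps:
  assumes "k_alg (\<phi> :: 'k::field \<Rightarrow> 'a::ring_1)"
  shows "\<phi> 0 = 0" "\<phi> 1 = 1" "\<phi> (x + y) = \<phi> x + \<phi> y" "\<phi> (- x) = - \<phi> x"
    "\<phi> (x - y) = \<phi> x - \<phi> y" "\<phi> (x * y) = \<phi> x * \<phi> y" "\<phi> (x ^ n) = \<phi> x ^ n"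
proof -
  have add: "\<And>x y. \<phi> (x + y) = \<phi> x + \<phi> y" and mult: "\<And>x y. \<phi> (x * y) = \<phi> x * \<phi> y"
    and one: "\<phi> 1 = 1"
    using assms unfolding k_alg_def by blast+
  show zero: "\<phi> 0 = 0" using add[of 0 0] by simp
  show minus: "\<phi> (- x) = - \<phi> x" for x
    using add[of x "- x"] zero by (metis add.right_inverse neg_eq_iff_add_eq_0)
  show "\<phi> 1 = 1" "\<phi> (x + y) = \<phi> x + \<phi> y" "\<phi> (x * y) = \<phi> x * \<phi> y" by (fact one add mult)+
  show "\<phi> (x - y) = \<phi> x - \<phi> y" using add[of x "- y"] minus[of y] by simp
  show "\<phi> (x ^ n) = \<phi> x ^ n" by (induction n) (simp_all add: one mult)
qed

lemma k_alg_central: "k_alg \<phi> \<Longrightarrow> \<phi> x * z = z * \<phi> x"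
  unfolding k_alg_def by blast

lemma mult_cancel_left_unit: "y * x = 1 \<Longrightarrow> x * u = x * v \<Longrightarrow> u = (v :: 'a::monoid_mult)"
  by (metis mult.assoc mult_1_left)

lemma mult_cancel_right_unit: "x * y = 1 \<Longrightarrow> u * x = v * x \<Longrightarrow> u = (v :: 'a::monoid_mult)"
  by (metis mult.assoc mult_1_right)

lemma mult_eq_nested: "x * y = r \<Longrightarrow> x * (y * z) = (r :: 'a::semigroup_mult) * z"
  by (metis mult.assoc)

lemma is_inv_unique: "is_inv x y \<Longrightarrow> is_inv x z \<Longrightarrow> y = (z :: 'a::ring_1)"
  unfolding is_inv_def by (metis mult.assoc mult_1_left mult_1_right)

lemma supercomm_umat:
  "supercomm p (umat (u 1 1) (u 1 2) (u 2 1) (u 2 2)) (umat (v 1 1) (v 1 2) (v 2 1) (v 2 2))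
   \<longleftrightarrow> supercomm p u v"
  unfolding supercomm_def umat_def by simp

lemma mmul_entries:
  "mmul u v 1 1 = u 1 1 * v 1 1 + u 1 2 * v 2 1" "mmul u v 1 2 = u 1 1 * v 1 2 + u 1 2 * v 2 2"
  "mmul u v 2 1 = u 2 1 * v 1 1 + u 2 2 * v 2 1" "mmul u v 2 2 = u 2 1 * v 1 2 + u 2 2 * v 2 2"
  unfolding mmul_def by simp_all

definition quad_monomials :: "(nat \<Rightarrow> nat \<Rightarrow> 'a::ring_1) \<Rightarrow> nat \<Rightarrow> nat \<Rightarrow> nat \<Rightarrow> nat \<Rightarrow> 'a" where
  "quad_monomials u = (\<lambda>f c e d. u f c * u e d)"

text \<open>
  P f c e d stands for the monomial u^f_c u^e_d, and Q, Qi for q, q\<inverse>. The conditions are the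
  relations of the theorem, each solved for its monomial that is largest for the order
  \<alpha> < \<beta> < \<gamma> < \<delta>.
\<close>
definition Omega_quadratic_rels :: "'a::ring_1 \<Rightarrow> 'a \<Rightarrow> (nat \<Rightarrow> nat \<Rightarrow> nat \<Rightarrow> nat \<Rightarrow> 'a) \<Rightarrow> bool" where
  "Omega_quadratic_rels Q Qi P \<longleftrightarrow>
     P 1 2 1 1 = P 1 1 1 2 \<and>
     P 2 1 1 1 = Q * (Q * P 1 1 2 1) \<and>
     P 2 2 1 2 = P 1 2 2 2 \<and>
     P 2 2 2 1 = Qi * (Qi * P 2 1 2 2) \<and>
     P 2 1 1 2 = - (Q * (Q * P 1 2 2 1)) \<and>
     P 2 2 1 1 = P 1 1 2 2 + P 1 2 2 1 - Q * (Q * P 1 2 2 1) \<and>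
     P 1 2 1 2 = 0 \<and>
     P 2 1 2 1 = 0"

locale central_unit =
  fixes Q Qi :: "'a::ring_1"
  assumes right_inverse: "Q * Qi = 1" and left_inverse: "Qi * Q = 1" and central: "Q * x = x * Q"
begin

lemma inverse_central: "Qi * x = x * Qi"
proof -
  have "Qi * x = Qi * (x * Q) * Qi" by (simp add: mult.assoc right_inverse)
  also have "\<dots> = Qi * Q * x * Qi" by (simp add: central mult.assoc)
  also have "\<dots> = x * Qi" by (simp add: left_inverse)
  finally show ?thesis .
qed

lemma cancel_simps [simp]: "Q * (Qi * z) = z" "Qi * (Q * z) = z"
  by (simp_all add: mult.assoc[symmetric] right_inverse left_inverse)

lemma scalars_left:
  "x * Q = Q * x" "x * Qi = Qi * x" "x * (Q * z) = Q * (x * z)" "x * (Qi * z) = Qi * (x * z)"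
  by (metis central, metis inverse_central, metis central mult.assoc, metis inverse_central mult.assoc)

lemma scalar_cancel: "Q * x = Q * y \<Longrightarrow> x = y" "Qi * x = Qi * y \<Longrightarrow> x = y"
  by (metis cancel_simps(2), metis cancel_simps(1))

lemma scalar_square_swap: "x = Q * (Q * y) \<longleftrightarrow> y = Qi * (Qi * x)"
  by (metis cancel_simps)

text \<open>The monomial table on the left is that of M in the super-opposite algebra.\<close>
lemma Omega_quadratic_rels_super_opposite:
  "Omega_quadratic_rels Q Qi
     (\<lambda>f c e d. (-1) ^ ((pOm f + pOm c) * (pOm e + pOm d)) * (M e d * M f c))
   \<longleftrightarrow> Omega_quadratic_rels Qi Q (quad_monomials M)"
proof -
  define a b c d where "a = M 1 1" and "b = M 1 2" and "c = M 2 1" and "d = M 2 2"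
  have lhs: "Omega_quadratic_rels Q Qi
     (\<lambda>f c e d. (-1) ^ ((pOm f + pOm c) * (pOm e + pOm d)) * (M e d * M f c)) \<longleftrightarrow>
     a * b = b * a \<and> a * c = Q * (Q * (c * a)) \<and> b * d = d * b \<and> c * d = Qi * (Qi * (d * c)) \<and>
     - (b * c) = Q * (Q * (c * b)) \<and> a * d = d * a - c * b + Q * (Q * (c * b)) \<and>
     b * b = 0 \<and> c * c = 0"
    unfolding Omega_quadratic_rels_def a_def b_def c_def d_def pOm_def by simp
  have rhs: "Omega_quadratic_rels Qi Q (quad_monomials M) \<longleftrightarrow>
     b * a = a * b \<and> c * a = Qi * (Qi * (a * c)) \<and> d * b = b * d \<and> d * c = Q * (Q * (c * d)) \<and>
     c * b = - (Qi * (Qi * (b * c))) \<and> d * a = a * d + b * c - Qi * (Qi * (b * c)) \<and>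
     b * b = 0 \<and> c * c = 0"
    unfolding Omega_quadratic_rels_def quad_monomials_def a_def b_def c_def d_def by simp
  have odd_odd: "- (b * c) = Q * (Q * (c * b)) \<longleftrightarrow> c * b = - (Qi * (Qi * (b * c)))"
    using scalar_square_swap[of "- (b * c)" "c * b"] by simp
  have even_even: "a * d = d * a - c * b + Q * (Q * (c * b)) \<longleftrightarrow>
      d * a = a * d + b * c - Qi * (Qi * (b * c))"
    if "c * b = - (Qi * (Qi * (b * c)))"
    using that by (auto simp: algebra_simps)
  show ?thesis
    unfolding lhs rhs
    using scalar_square_swap[of "a * c" "c * a"] scalar_square_swap[of "d * c" "c * d"]
      eq_commute[of "a * b"] eq_commute[of "b * d"] odd_odd even_even
    by argo
qed

end

locale Omega_generators = central_unit +
  fixes a b c d :: "'a::ring_1"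
  assumes rels: "Omega_quadratic_rels Q Qi (quad_monomials (umat a b c d))"
begin

lemma commutation:
  "b * a = a * b" "c * a = Q * (Q * (a * c))" "d * b = b * d" "d * c = Qi * (Qi * (c * d))"
  "c * b = - (Q * (Q * (b * c)))" "d * a = a * d + b * c - Q * (Q * (b * c))"
  "b * b = 0" "c * c = 0"
  using rels unfolding Omega_quadratic_rels_def quad_monomials_def umat_def by simp_all

text \<open>
  The scalars are moved to the left only past the generators: the unrestricted rules would loop
  on Q * Qi.
\<close>
lemmas normalize = commutation commutation[THEN mult_eq_nested]
  scalars_left[where x = a] scalars_left[where x = b] scalars_left[where x = c] scalars_left[where x = d]

end

locale Omega_generators_invertible = Omega_generators +
  fixes A D :: "'a::ring_1"
  assumes inverses: "a * A = 1" "A * a = 1" "d * D = 1" "D * d = 1"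
begin

lemmas normalize_inverses = normalize inverses inverses[THEN mult_eq_nested]
  scalars_left[where x = A] scalars_left[where x = D]

lemma inverse_commutation:
  "b * A = A * b" "c * A = Qi * (Qi * (A * c))"
  "d * A = A * d + A * (A * (b * c)) - Qi * (Qi * (A * (A * (b * c))))"
  "D * b = b * D" "D * c = Q * (Q * (c * D))"
  "D * a = a * D + Q * (Q * (Q * (Q * (b * (c * (D * D)))))) - Q * (Q * (b * (c * (D * D))))"
proof -
  show "b * A = A * b" "c * A = Qi * (Qi * (A * c))"
    by (rule mult_cancel_right_unit[OF inverses(1)], simp add: normalize_inverses mult.assoc)+
  show "d * A = A * d + A * (A * (b * c)) - Qi * (Qi * (A * (A * (b * c))))"
    by (rule mult_cancel_right_unit[OF inverses(1)]) (simp add: normalize_inverses algebra_simps)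
  show "D * b = b * D" "D * c = Q * (Q * (c * D))"
    by (rule mult_cancel_left_unit[OF inverses(4)], simp add: normalize_inverses mult.assoc)+
  show "D * a = a * D + Q * (Q * (Q * (Q * (b * (c * (D * D)))))) - Q * (Q * (b * (c * (D * D))))"
    by (rule mult_cancel_left_unit[OF inverses(4)]) (simp add: normalize_inverses algebra_simps)
qed

lemma inverse_inverse_commutation:
  "D * A = A * D + A * (A * (b * (c * (D * D)))) - Q * (Q * (A * (A * (b * (c * (D * D))))))"
  by (rule mult_cancel_left_unit[OF inverses(4)], rule mult_cancel_right_unit[OF inverses(1)])
    (simp add: normalize_inverses inverse_commutation inverse_commutation[THEN mult_eq_nested]
      algebra_simps)

lemmas normalize_all = normalize_inverses inverse_commutation inverse_commutation[THEN mult_eq_nested]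
  inverse_inverse_commutation inverse_inverse_commutation[THEN mult_eq_nested]

lemma antipode_left_inverse: "is_id2 (mmul (Smat a b c d A D) (umat a b c d))"
  unfolding is_id2_def mmul_def Smat_def umat_def by (simp add: normalize_all algebra_simps)

lemma antipode_right_inverse: "is_id2 (mmul (umat a b c d) (Smat a b c d A D))"
  unfolding is_id2_def mmul_def Smat_def umat_def by (simp add: normalize_all algebra_simps)

lemma antipode_diagonal_invertible:
  "is_inv (Smat a b c d A D 1 1) (a - b * D * c)" "is_inv (Smat a b c d A D 2 2) (d - c * A * b)"
  unfolding is_inv_def Smat_def umat_def by (simp_all add: normalize_all algebra_simps)

lemma sdet_central: "x \<in> {a, b, c, d} \<Longrightarrow> sdet a b c d D * x = x * sdet a b c d D"
  unfolding sdet_def by (auto simp: normalize_all algebra_simps)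

lemma antipode_rels: "Omega_quadratic_rels Qi Q (quad_monomials (Smat a b c d A D))"
  unfolding Omega_quadratic_rels_def quad_monomials_def Smat_def umat_def
  by (simp add: normalize_all algebra_simps)

end

locale Omega_pair =
  u: Omega_generators Q Qi a b c d + v: Omega_generators Q Qi e f g h for Q Qi a b c d e f g h +
  assumes supercommute: "supercomm pOm (umat a b c d) (umat e f g h)"
begin

lemma cross_commutation:
  "e * a = a * e" "e * b = b * e" "e * c = c * e" "e * d = d * e"
  "f * a = a * f" "f * b = - (b * f)" "f * c = - (c * f)" "f * d = d * f"
  "g * a = a * g" "g * b = - (b * g)" "g * c = - (c * g)" "g * d = d * g"
  "h * a = a * h" "h * b = b * h" "h * c = c * h" "h * d = d * h"
  using supercommute unfolding supercomm_def umat_def pOm_def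
  by (simp_all add: minus_equation_iff[of "b * f"] minus_equation_iff[of "c * f"]
      minus_equation_iff[of "b * g"] minus_equation_iff[of "c * g"])

lemma coproduct_rels:
  "Omega_quadratic_rels Q Qi
     (quad_monomials (umat (a * e + b * g) (a * f + b * h) (c * e + d * g) (c * f + d * h)))"
  unfolding Omega_quadratic_rels_def quad_monomials_def umat_def
  by (simp add: u.normalize v.normalize cross_commutation cross_commutation[THEN mult_eq_nested]
      algebra_simps)

end

locale Omega_pair_invertible = Omega_pair +
  fixes A D E H :: "'a::ring_1"
  assumes inverses: "a * A = 1" "A * a = 1" "d * D = 1" "D * d = 1"
    "e * E = 1" "E * e = 1" "h * H = 1" "H * h = 1"
begin

sublocale u: Omega_generators_invertible Q Qi a b c d A D by unfold_locales (rule inverses)+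
sublocale v: Omega_generators_invertible Q Qi e f g h E H by unfold_locales (rule inverses)+

lemmas normalize_pair = u.normalize_all v.normalize_all
  cross_commutation cross_commutation[THEN mult_eq_nested]

lemma cross_commutation_inverses:
  "E * a = a * E" "E * b = b * E" "E * c = c * E" "E * d = d * E"
  "H * a = a * H" "H * b = b * H" "H * c = c * H" "H * d = d * H"
  "e * A = A * e" "f * A = A * f" "g * A = A * g" "h * A = A * h"
  "e * D = D * e" "f * D = D * f" "g * D = D * g" "h * D = D * h"
proof -
  show "E * a = a * E" "E * b = b * E" "E * c = c * E" "E * d = d * E"
    by (rule mult_cancel_left_unit[OF inverses(6)], simp add: normalize_pair mult.assoc)+
  show "H * a = a * H" "H * b = b * H" "H * c = c * H" "H * d = d * H"
    by (rule mult_cancel_left_unit[OF inverses(8)], simp add: normalize_pair mult.assoc)+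
  show "e * A = A * e" "f * A = A * f" "g * A = A * g" "h * A = A * h"
    by (rule mult_cancel_right_unit[OF inverses(1)], simp add: normalize_pair mult.assoc)+
  show "e * D = D * e" "f * D = D * f" "g * D = D * g" "h * D = D * h"
    by (rule mult_cancel_right_unit[OF inverses(3)], simp add: normalize_pair mult.assoc)+
qed

lemma inverses_cross_commutation: "E * A = A * E" "E * D = D * E" "H * A = A * H" "H * D = D * H"
proof -
  note rewrite_rules = normalize_pair cross_commutation_inverses
    cross_commutation_inverses[THEN mult_eq_nested] mult.assoc
  show "E * A = A * E" by (rule mult_cancel_left_unit[OF inverses(6)],
      rule mult_cancel_right_unit[OF inverses(1)], simp add: rewrite_rules)
  show "E * D = D * E" by (rule mult_cancel_left_unit[OF inverses(6)],
      rule mult_cancel_right_unit[OF inverses(3)], simp add: rewrite_rules)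
  show "H * A = A * H" by (rule mult_cancel_left_unit[OF inverses(8)],
      rule mult_cancel_right_unit[OF inverses(1)], simp add: rewrite_rules)
  show "H * D = D * H" by (rule mult_cancel_left_unit[OF inverses(8)],
      rule mult_cancel_right_unit[OF inverses(3)], simp add: rewrite_rules)
qed

lemmas normalize_pair_all = normalize_pair
  cross_commutation_inverses cross_commutation_inverses[THEN mult_eq_nested]
  inverses_cross_commutation inverses_cross_commutation[THEN mult_eq_nested]

lemma coproduct_diagonal_invertible:
  "is_inv (a * e + b * g) (E * A - E * A * b * g * E * A)"
  "is_inv (c * f + d * h) (H * D - H * D * c * f * H * D)"
  unfolding is_inv_def by (simp_all add: normalize_pair_all algebra_simps)

lemma sdet_multiplicative:
  "sdet (a * e + b * g) (a * f + b * h) (c * e + d * g) (c * f + d * h) (H * D - H * D * c * f * H * D)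
   = sdet a b c d D * sdet e f g h H"
  unfolding sdet_def by (simp add: normalize_pair_all algebra_simps)

end

locale Omega_setting =
  fixes q :: "'k::field" and \<phi> :: "'k \<Rightarrow> 'a::ring_1"
  assumes q_nonzero: "q \<noteq> 0" and one_plus_q_square_nonzero: "1 + q ^ 2 \<noteq> 0"
    and k_alg: "k_alg \<phi>"
begin

lemmas \<phi>_simps = k_alg_simps[OF k_alg]

sublocale central_unit "\<phi> q" "\<phi> (inverse q)"
proof
  show "\<phi> q * \<phi> (inverse q) = 1" "\<phi> (inverse q) * \<phi> q = 1"
    using q_nonzero by (simp_all flip: \<phi>_simps(6) add: \<phi>_simps(2))
qed (rule k_alg_central[OF k_alg])

lemma q_plus_inverse_invertible: "\<phi> (q / (1 + q ^ 2)) * (\<phi> q + \<phi> (inverse q)) = 1"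
proof -
  have "q + inverse q = (1 + q ^ 2) / q"
    using q_nonzero by (simp add: field_simps power2_eq_square)
  then have "q / (1 + q ^ 2) * (q + inverse q) = 1"
    using q_nonzero one_plus_q_square_nonzero by simp
  then show ?thesis by (metis \<phi>_simps(2,3,6))
qed

lemma FRT_gen_ROm_iff:
  "FRT_gen \<phi> pOm (Rsup pOm (ROm q)) P \<longleftrightarrow> Omega_quadratic_rels (\<phi> q) (\<phi> (inverse q)) P"
proof
  let ?Q = "\<phi> q" and ?Qi = "\<phi> (inverse q)"
  assume "FRT_gen \<phi> pOm (Rsup pOm (ROm q)) P"
  note component = this[unfolded FRT_gen_def Rsup_def ROm_def pOm_def, rule_format]
  have beta_alpha: "?Q * P 1 1 1 2 = ?Q * P 1 2 1 1"
    using component[of 1 1 1 2] by (simp add: \<phi>_simps scalars_left)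
  have gamma_alpha: "?Q * P 1 1 2 1 = ?Qi * P 2 1 1 1"
    using component[of 1 2 1 1] by (simp add: \<phi>_simps scalars_left algebra_simps)
  have delta_beta: "?Qi * P 1 2 2 2 = ?Qi * P 2 2 1 2"
    using component[of 2 1 2 2] by (simp add: \<phi>_simps scalars_left)
  have delta_gamma: "?Q * P 2 2 2 1 = ?Qi * P 2 1 2 2"
    using component[of 2 2 1 2] by (simp add: \<phi>_simps scalars_left)
  have gamma_beta: "?Qi * P 2 1 1 2 = - (?Q * P 1 2 2 1)"
    using component[of 2 1 1 2] by (simp add: \<phi>_simps scalars_left)
  have delta_alpha: "?Qi * P 2 2 1 1 = ?Qi * P 1 1 2 2 - ?Q * P 1 2 2 1 + ?Qi * P 1 2 2 1"
    using component[of 2 1 2 1] by (simp add: \<phi>_simps scalars_left algebra_simps)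
  have beta_beta: "(?Q + ?Qi) * P 1 2 1 2 = 0"
    using component[of 1 1 2 2] by (simp add: \<phi>_simps scalars_left algebra_simps)
  have gamma_gamma: "(?Q + ?Qi) * P 2 1 2 1 = 0"
    using component[of 2 2 1 1]
    by (simp add: \<phi>_simps scalars_left distrib_right neg_eq_iff_add_eq_0 add.commute)
  \<comment> \<open>The FRT relations only give (q + q\<inverse>) \<beta> \<beta> = 0 and (q + q\<inverse>) \<gamma> \<gamma> = 0;
    this is where 1 + q * q \<noteq> 0 is needed.\<close>
  have annihilated: "x = 0" if "(?Q + ?Qi) * x = 0" for x
    using that q_plus_inverse_invertible by (metis mult.assoc mult_1_left mult_zero_right)
  have "P 2 2 1 1 = ?Q * (?Qi * P 2 2 1 1)" by simp
  also have "\<dots> = P 1 1 2 2 + P 1 2 2 1 - ?Q * (?Q * P 1 2 2 1)"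
    unfolding delta_alpha by (simp add: algebra_simps)
  finally show "Omega_quadratic_rels ?Q ?Qi P"
    unfolding Omega_quadratic_rels_def
    using scalar_cancel(1)[OF beta_alpha] scalar_cancel(2)[OF delta_beta]
      annihilated[OF beta_beta] annihilated[OF gamma_gamma] gamma_alpha delta_gamma gamma_beta
    by (metis cancel_simps mult_minus_right)
next
  assume "Omega_quadratic_rels (\<phi> q) (\<phi> (inverse q)) P"
  \<comment> \<open>In the expanded sums simp writes the index 1 as Suc 0, so the rules must too.\<close>
  note rels = this[unfolded Omega_quadratic_rels_def, unfolded One_nat_def]
  show "FRT_gen \<phi> pOm (Rsup pOm (ROm q)) P"
    unfolding FRT_gen_def Rsup_def ROm_def pOm_def
    by (simp add: rels \<phi>_simps scalars_left(1,2)[where x = "P f c e d" for f c e d] algebra_simps)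
qed

lemma omega_rels_iff:
  "omega_rels \<phi> q a b c d \<longleftrightarrow>
   Omega_quadratic_rels (\<phi> q) (\<phi> (inverse q)) (quad_monomials (umat a b c d))"
  unfolding omega_rels_def Omega_quadratic_rels_def quad_monomials_def umat_def
  by (simp add: \<phi>_simps power2_eq_square algebra_simps)

lemma FRT_iff_omega_rels: "FRT \<phi> pOm (Rsup pOm (ROm q)) (umat a b c d) \<longleftrightarrow> omega_rels \<phi> q a b c d"
  unfolding FRT_def quad_monomials_def[symmetric] FRT_gen_ROm_iff omega_rels_iff ..

lemma FRT_sop_iff:
  "FRT_sop \<phi> pOm (Rsup pOm (ROm q)) M \<longleftrightarrow>
   Omega_quadratic_rels (\<phi> (inverse q)) (\<phi> q) (quad_monomials M)"
  unfolding FRT_sop_def FRT_gen_ROm_iff Omega_quadratic_rels_super_opposite ..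

lemma coproduct_omega_rels:
  assumes "omega_rels \<phi> q (u 1 1) (u 1 2) (u 2 1) (u 2 2)"
    and "omega_rels \<phi> q (v 1 1) (v 1 2) (v 2 1) (v 2 2)" and "supercomm pOm u v"
  shows "omega_rels \<phi> q (mmul u v 1 1) (mmul u v 1 2) (mmul u v 2 1) (mmul u v 2 2)"
proof -
  interpret Omega_pair "\<phi> q" "\<phi> (inverse q)" "u 1 1" "u 1 2" "u 2 1" "u 2 2" "v 1 1" "v 1 2" "v 2 1" "v 2 2"
    using assms(1,2)[unfolded omega_rels_iff] supercomm_umat[THEN iffD2, OF assms(3)] by unfold_locales
  show ?thesis unfolding omega_rels_iff mmul_entries by (rule coproduct_rels)
qed

lemma antipode_properties:
  assumes "omega_rels \<phi> q a b c d" and "is_inv a A" and "is_inv d D"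
  shows "is_id2 (mmul (Smat a b c d A D) (umat a b c d))"
    and "is_id2 (mmul (umat a b c d) (Smat a b c d A D))"
    and "FRT_sop \<phi> pOm (Rsup pOm (ROm q)) (Smat a b c d A D)"
    and "\<exists>x. is_inv (Smat a b c d A D 1 1) x"
    and "\<exists>x. is_inv (Smat a b c d A D 2 2) x"
    and "\<forall>x\<in>{a, b, c, d}. sdet a b c d D * x = x * sdet a b c d D"
proof -
  interpret Omega_generators_invertible "\<phi> q" "\<phi> (inverse q)" a b c d A D
    using assms by unfold_locales (simp_all add: omega_rels_iff is_inv_def)
  show "is_id2 (mmul (Smat a b c d A D) (umat a b c d))"
    and "is_id2 (mmul (umat a b c d) (Smat a b c d A D))"
    by (fact antipode_left_inverse antipode_right_inverse)+
  show "\<exists>x. is_inv (Smat a b c d A D 1 1) x" "\<exists>x. is_inv (Smat a b c d A D 2 2) x"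
    using antipode_diagonal_invertible by blast+
  show "\<forall>x\<in>{a, b, c, d}. sdet a b c d D * x = x * sdet a b c d D"
    using sdet_central by blast
  show "FRT_sop \<phi> pOm (Rsup pOm (ROm q)) (Smat a b c d A D)"
    unfolding FRT_sop_iff by (rule antipode_rels)
qed

lemma sdet_group_like:
  assumes "omega_rels \<phi> q (u 1 1) (u 1 2) (u 2 1) (u 2 2)" and "is_inv (u 1 1) A" and "is_inv (u 2 2) D"
    and "omega_rels \<phi> q (v 1 1) (v 1 2) (v 2 1) (v 2 2)" and "is_inv (v 1 1) E" and "is_inv (v 2 2) H"
    and "supercomm pOm u v"
  shows "\<exists>x. is_inv (mmul u v 1 1) x" and "\<exists>x. is_inv (mmul u v 2 2) x"
    and "is_inv (mmul u v 2 2) x \<Longrightarrow>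
      sdet (mmul u v 1 1) (mmul u v 1 2) (mmul u v 2 1) (mmul u v 2 2) x
      = sdet (u 1 1) (u 1 2) (u 2 1) (u 2 2) D * sdet (v 1 1) (v 1 2) (v 2 1) (v 2 2) H"
proof -
  interpret Omega_pair_invertible "\<phi> q" "\<phi> (inverse q)"
      "u 1 1" "u 1 2" "u 2 1" "u 2 2" "v 1 1" "v 1 2" "v 2 1" "v 2 2" A D E H
    using assms(1,4)[unfolded omega_rels_iff] supercomm_umat[THEN iffD2, OF assms(7)]
      assms(2,3,5,6)[unfolded is_inv_def]
    by unfold_locales auto
  show "\<exists>x. is_inv (mmul u v 1 1) x" "\<exists>x. is_inv (mmul u v 2 2) x"
    using coproduct_diagonal_invertible unfolding mmul_entries by blast+
  show "is_inv (mmul u v 2 2) x \<Longrightarrow>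
      sdet (mmul u v 1 1) (mmul u v 1 2) (mmul u v 2 1) (mmul u v 2 2) x
      = sdet (u 1 1) (u 1 2) (u 2 1) (u 2 2) D * sdet (v 1 1) (v 1 2) (v 2 1) (v 2 2) H"
    using coproduct_diagonal_invertible(2) sdet_multiplicative is_inv_unique
    unfolding mmul_entries by metis
qed

end

theorem mainTheorem9:
  fixes q :: "'k::field" and \<phi> :: "'k \<Rightarrow> 'a::ring_1"
  assumes q0: "q \<noteq> 0" and q2: "1 + q ^ 2 \<noteq> 0" and alg: "k_alg \<phi>"
  shows
    \<comment> \<open>R_Omega is superizable w.r.t. p(1)=0, p(2)=1\<close>
    "superizable pOm (ROm q)
     \<comment> \<open>presentation of A(underline R_Omega): the super FRT relations are equivalent to the listed ones\<close>
   \<and> (\<forall>\<alpha> \<beta> \<gamma> \<delta> :: 'a.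
        FRT \<phi> pOm (Rsup pOm (ROm q)) (umat \<alpha> \<beta> \<gamma> \<delta>) \<longleftrightarrow> omega_rels \<phi> q \<alpha> \<beta> \<gamma> \<delta>)
     \<comment> \<open>the grading with alpha, delta even and beta, gamma odd is compatible with the relations\<close>
   \<and> (\<forall>\<alpha> \<beta> \<gamma> \<delta> :: 'a. omega_rels \<phi> q \<alpha> \<beta> \<gamma> \<delta> \<longrightarrow> omega_rels \<phi> q \<alpha> (-\<beta>) (-\<gamma>) \<delta>)
     \<comment> \<open>counit epsilon(u) = id is well defined\<close>
   \<and> omega_rels (\<lambda>x. x) q (1::'k) 0 0 1
     \<comment> \<open>super-coproduct Delta u = u \<otimes> u into the graded tensor product is well defined\<close>
   \<and> (\<forall>u v :: nat \<Rightarrow> nat \<Rightarrow> 'a.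
        omega_rels \<phi> q (u 1 1) (u 1 2) (u 2 1) (u 2 2) \<and>
        omega_rels \<phi> q (v 1 1) (v 1 2) (v 2 1) (v 2 2) \<and> supercomm pOm u v \<longrightarrow>
        omega_rels \<phi> q (mmul u v 1 1) (mmul u v 1 2) (mmul u v 2 1) (mmul u v 2 2))
     \<comment> \<open>GL^Omega_q(1|1): antipode and super-determinant\<close>
   \<and> (\<forall>\<alpha> \<beta> \<gamma> \<delta> ai di :: 'a.
        omega_rels \<phi> q \<alpha> \<beta> \<gamma> \<delta> \<and> is_inv \<alpha> ai \<and> is_inv \<delta> di \<longrightarrow>
          is_id2 (mmul (Smat \<alpha> \<beta> \<gamma> \<delta> ai di) (umat \<alpha> \<beta> \<gamma> \<delta>))
        \<and> is_id2 (mmul (umat \<alpha> \<beta> \<gamma> \<delta>) (Smat \<alpha> \<beta> \<gamma> \<delta> ai di))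
        \<and> FRT_sop \<phi> pOm (Rsup pOm (ROm q)) (Smat \<alpha> \<beta> \<gamma> \<delta> ai di)
        \<and> (\<exists>x. is_inv (Smat \<alpha> \<beta> \<gamma> \<delta> ai di 1 1) x)
        \<and> (\<exists>x. is_inv (Smat \<alpha> \<beta> \<gamma> \<delta> ai di 2 2) x)
        \<and> (\<forall>x\<in>{\<alpha>, \<beta>, \<gamma>, \<delta>}. sdet \<alpha> \<beta> \<gamma> \<delta> di * x = x * sdet \<alpha> \<beta> \<gamma> \<delta> di)
        \<and> sdet \<alpha> (-\<beta>) (-\<gamma>) \<delta> di = sdet \<alpha> \<beta> \<gamma> \<delta> di)
     \<comment> \<open>localized coproduct is well defined and the super-determinant is group-like\<close>
   \<and> sdet (1::'a) 0 0 1 1 = 1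
   \<and> (\<forall>(u :: nat \<Rightarrow> nat \<Rightarrow> 'a) v ai1 di1 ai2 di2.
        omega_rels \<phi> q (u 1 1) (u 1 2) (u 2 1) (u 2 2) \<and> is_inv (u 1 1) ai1 \<and> is_inv (u 2 2) di1 \<and>
        omega_rels \<phi> q (v 1 1) (v 1 2) (v 2 1) (v 2 2) \<and> is_inv (v 1 1) ai2 \<and> is_inv (v 2 2) di2 \<and>
        supercomm pOm u v \<longrightarrow>
          (\<exists>x. is_inv (mmul u v 1 1) x) \<and> (\<exists>x. is_inv (mmul u v 2 2) x)
        \<and> (\<forall>x. is_inv (mmul u v 2 2) x \<longrightarrow>
              sdet (mmul u v 1 1) (mmul u v 1 2) (mmul u v 2 1) (mmul u v 2 2) x
              = sdet (u 1 1) (u 1 2) (u 2 1) (u 2 2) di1 * sdet (v 1 1) (v 1 2) (v 2 1) (v 2 2) di2))"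
proof -
  interpret Omega_setting q \<phi> using q0 q2 alg by unfold_locales
  have "superizable pOm (ROm q)" by (auto simp: superizable_def ROm_def pOm_def)
  moreover have "omega_rels \<phi> q \<alpha> (- \<beta>) (- \<gamma>) \<delta>" if "omega_rels \<phi> q \<alpha> \<beta> \<gamma> \<delta>" for \<alpha> \<beta> \<gamma> \<delta>
    using that by (simp add: omega_rels_def)
  moreover have "omega_rels (\<lambda>x. x) q (1::'k) 0 0 1" by (simp add: omega_rels_def)
  moreover have "sdet \<alpha> (- \<beta>) (- \<gamma>) \<delta> di = sdet \<alpha> \<beta> \<gamma> \<delta> di" for \<alpha> \<beta> \<gamma> \<delta> di :: 'a
    by (simp add: sdet_def)
  moreover have "sdet (1::'a) 0 0 1 1 = 1" by (simp add: sdet_def)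
  ultimately show ?thesis
    using FRT_iff_omega_rels coproduct_omega_rels antipode_properties sdet_group_like
    by auto
qed

end
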